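(* Let $\mathcal D=(S,Act,L,\varphi,\ell)$ be an MDP, let $\alpha_1,\alpha_2,\dots$ be general strategies for $\mathcal D$, and let $S_0\subseteq S$ satisfy $\liminf_{i\to\infty}\max\{d_{\mathcal D(\alpha_i)}(s,t):s,t\in S_0\}=0$. Then there exists a general strategy $\alpha$ for $\mathcal D$ such that all states of $S_0$ are pairwise probabilistically bisimilar in the LMC $\mathcal D(\alpha)$.
   Context: An MDP is $\mathcal D=(S,Act,L,\varphi,\ell)$ with finite $S,Act,L$, a partial function $\varphi:S\times Act\rightharpoonup\mathrm{Distr}(S)$ and labelling $\ell:S\to L$. A path is $s_0{\sf m}_1s_1\cdots{\sf m}_ns_n$ with $\varphi(s_i,{\sf m}_{i+1})$ defined and positive on $s_{i+1}$. A general strategy maps each path to a distribution over the actions available at its last state; it induces the LMC $\mathcal D(\alpha)$ whose states are paths, with $\tau(\rho)(\rho{\sf m}t)=\alpha(\rho)({\sf m})\varphi({\sf last}(\rho),{\sf m})(t)$ and label of $\rho$ the label of its last state; a state $s\in S$ is identified with the one-state path $s$. In an LMC $(S',L,\tau,\ell')$, probabilistic bisimilarity is the largest equivalence $R$ such that $(s,t)\in R$ implies $\ell'(s)=\ell'(t)$ and $\tau(s)(E)=\tau(t)(E)$ for each $R$-class $E$; the probabilistic bisimilarity distance $d$ is the least fixed point of $\Delta(e)(s,t)=1$ if labels differ and $\min_\omega\sum_{u,v}\omega(u,v)e(u,v)$ otherwise, over couplings $\omega$ of $\tau(s),\tau(t)$. *)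

theory Defs
  imports "HOL-Probability.Probability"
begin

text \<open>An MDP (S, Act, L, phi, lab): phi s m = None means phi is undefined at (s,m).\<close>

definition is_mdp ::
  "'s set \<Rightarrow> 'a set \<Rightarrow> 'l set \<Rightarrow> ('s \<Rightarrow> 'a \<Rightarrow> 's pmf option) \<Rightarrow> ('s \<Rightarrow> 'l) \<Rightarrow> bool" where
  "is_mdp S Act L phi lab \<longleftrightarrow>
     finite S \<and> finite Act \<and> finite L \<and> (\<forall>s\<in>S. lab s \<in> L) \<and>
     (\<forall>s m \<mu>. phi s m = Some \<mu> \<longrightarrow> s \<in> S \<and> m \<in> Act \<and> set_pmf \<mu> \<subseteq> S)"

text \<open>A path s0 m1 s1 ... mn sn is represented as (s0, [(m1,s1),...,(mn,sn)]).\<close>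

type_synonym ('s,'a) path = "'s \<times> ('a \<times> 's) list"

definition path_last :: "('s,'a) path \<Rightarrow> 's" where
  "path_last \<rho> = (if snd \<rho> = [] then fst \<rho> else snd (last (snd \<rho>)))"

definition path_ext :: "('s,'a) path \<Rightarrow> 'a \<Rightarrow> 's \<Rightarrow> ('s,'a) path" where
  "path_ext \<rho> m t = (fst \<rho>, snd \<rho> @ [(m, t)])"

fun valid_steps :: "('s \<Rightarrow> 'a \<Rightarrow> 's pmf option) \<Rightarrow> 's \<Rightarrow> ('a \<times> 's) list \<Rightarrow> bool" where
  "valid_steps phi s [] = True"
| "valid_steps phi s ((m, t) # xs) =
     ((\<exists>\<mu>. phi s m = Some \<mu> \<and> pmf \<mu> t > 0) \<and> valid_steps phi t xs)"

definition is_path :: "'s set \<Rightarrow> ('s \<Rightarrow> 'a \<Rightarrow> 's pmf option) \<Rightarrow> ('s,'a) path \<Rightarrow> bool" where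
  "is_path S phi \<rho> \<longleftrightarrow> fst \<rho> \<in> S \<and> valid_steps phi (fst \<rho>) (snd \<rho>)"

text \<open>A general strategy maps each path to a distribution over the actions available
  at its last state (its values on non-paths are irrelevant).\<close>

definition is_strategy ::
  "'s set \<Rightarrow> 'a set \<Rightarrow> ('s \<Rightarrow> 'a \<Rightarrow> 's pmf option) \<Rightarrow> (('s,'a) path \<Rightarrow> 'a pmf) \<Rightarrow> bool" where
  "is_strategy S Act phi \<alpha> \<longleftrightarrow>
     (\<forall>\<rho>. is_path S phi \<rho> \<longrightarrow>
        set_pmf (\<alpha> \<rho>) \<subseteq> {m \<in> Act. phi (path_last \<rho>) m \<noteq> None})"

text \<open>Transition function of the induced LMC D(alpha):
  tau(rho)(rho m t) = alpha(rho)(m) * phi(last rho, m)(t).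
  (The branch for undefined phi has probability 0 from every path when alpha is a strategy.)\<close>

definition induced_trans ::
  "('s \<Rightarrow> 'a \<Rightarrow> 's pmf option) \<Rightarrow> (('s,'a) path \<Rightarrow> 'a pmf) \<Rightarrow> ('s,'a) path \<Rightarrow> ('s,'a) path pmf" where
  "induced_trans phi \<alpha> \<rho> =
     bind_pmf (\<alpha> \<rho>) (\<lambda>m. case phi (path_last \<rho>) m of
                            None \<Rightarrow> return_pmf \<rho>
                          | Some \<mu> \<Rightarrow> map_pmf (path_ext \<rho> m) \<mu>)"

definition induced_label :: "('s \<Rightarrow> 'l) \<Rightarrow> ('s,'a) path \<Rightarrow> 'l" where
  "induced_label lab \<rho> = lab (path_last \<rho>)"

definition state_path :: "'s \<Rightarrow> ('s,'a) path" where
  "state_path s = (s, [])"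

definition prob_bisimulation :: "('x \<Rightarrow> 'x pmf) \<Rightarrow> ('x \<Rightarrow> 'l) \<Rightarrow> ('x \<times> 'x) set \<Rightarrow> bool" where
  "prob_bisimulation \<tau> lab R \<longleftrightarrow> equiv UNIV R \<and>
     (\<forall>(s,t)\<in>R. lab s = lab t \<and>
        (\<forall>E \<in> UNIV // R. measure_pmf.prob (\<tau> s) E = measure_pmf.prob (\<tau> t) E))"

definition prob_bisimilar :: "('x \<Rightarrow> 'x pmf) \<Rightarrow> ('x \<Rightarrow> 'l) \<Rightarrow> 'x \<Rightarrow> 'x \<Rightarrow> bool" where
  "prob_bisimilar \<tau> lab s t \<longleftrightarrow> (\<exists>R. prob_bisimulation \<tau> lab R \<and> (s, t) \<in> R)"

definition couplings :: "'x pmf \<Rightarrow> 'x pmf \<Rightarrow> ('x \<times> 'x) pmf set" where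
  "couplings \<mu> \<nu> = {\<omega>. map_pmf fst \<omega> = \<mu> \<and> map_pmf snd \<omega> = \<nu>}"

definition bisim_Delta ::
  "('x \<Rightarrow> 'x pmf) \<Rightarrow> ('x \<Rightarrow> 'l) \<Rightarrow> ('x \<Rightarrow> 'x \<Rightarrow> ennreal) \<Rightarrow> ('x \<Rightarrow> 'x \<Rightarrow> ennreal)" where
  "bisim_Delta \<tau> lab e = (\<lambda>s t. if lab s \<noteq> lab t then 1
      else (INF \<omega> \<in> couplings (\<tau> s) (\<tau> t). \<integral>\<^sup>+ uv. e (fst uv) (snd uv) \<partial>measure_pmf \<omega>))"

definition bisim_dist :: "('x \<Rightarrow> 'x pmf) \<Rightarrow> ('x \<Rightarrow> 'l) \<Rightarrow> 'x \<Rightarrow> 'x \<Rightarrow> ennreal" where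
  "bisim_dist \<tau> lab = lfp (bisim_Delta \<tau> lab)"

end

theory Submission
  imports Defs "HOL-Library.Diagonal_Subsequence"
begin

text \<open>
  Pass to a subsequence along which the maximal distance on \<open>S0\<close> tends to \<open>0\<close> and along which,
  by a diagonal argument over the countably many pairs of a path and an action, the strategies
  converge pointwise to a strategy \<open>\<alpha>\<close>; the transition probabilities of \<open>D(\<alpha>\<^sub>k)\<close> then converge
  to those of \<open>D(\<alpha>)\<close>. By induction on \<open>n\<close>: if the \<open>n\<close>-th Kleene iterate of \<open>\<Delta>\<close> for \<open>D(\<alpha>\<^sub>k)\<close>
  has \<open>liminf 0\<close> at two paths, they are related by the \<open>n\<close>-th bisimulation approximant of \<open>D(\<alpha>)\<close>.
  Indeed, the finitely many successor pairs not related at level \<open>n - 1\<close> stay at distance bounded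
  away from \<open>0\<close>, so a coupling of small cost puts little mass on them and hence nearly respects
  the classes of level \<open>n - 1\<close>. As \<open>D(\<alpha>)\<close> is finitely branching, the intersection of all
  approximants is a bisimulation.
\<close>

section \<open>Bisimulation approximants\<close>

fun bisim_approx :: "('x \<Rightarrow> 'x pmf) \<Rightarrow> ('x \<Rightarrow> 'l) \<Rightarrow> nat \<Rightarrow> ('x \<times> 'x) set" where
  "bisim_approx \<tau> lab 0 = UNIV"
| "bisim_approx \<tau> lab (Suc n) = {(x, y). (x, y) \<in> bisim_approx \<tau> lab n \<and> lab x = lab y \<and>
     (\<forall>E \<in> UNIV // bisim_approx \<tau> lab n. measure_pmf.prob (\<tau> x) E = measure_pmf.prob (\<tau> y) E)}"

lemma equiv_bisim_approx: "equiv UNIV (bisim_approx \<tau> lab n)"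
proof (induction n)
  case 0
  show ?case by (simp add: equiv_def refl_on_def sym_def trans_def)
next
  case (Suc n)
  let ?R = "bisim_approx \<tau> lab n"
  have "refl ?R" "sym ?R" "trans ?R" using Suc by (auto elim: equivE)
  show ?case
  proof (rule equivI)
    show "refl (bisim_approx \<tau> lab (Suc n))"
      using \<open>refl ?R\<close> by (simp add: refl_on_def)
    show "sym (bisim_approx \<tau> lab (Suc n))"
      using \<open>sym ?R\<close> by (auto simp: sym_def)
    show "trans (bisim_approx \<tau> lab (Suc n))"
    proof (rule transI)
      fix x y z
      assume "(x, y) \<in> bisim_approx \<tau> lab (Suc n)" "(y, z) \<in> bisim_approx \<tau> lab (Suc n)"
      then show "(x, z) \<in> bisim_approx \<tau> lab (Suc n)"
        using transD[OF \<open>trans ?R\<close>, of x y z] by simp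
    qed
  qed simp
qed

lemma decseq_bisim_approx: "decseq (bisim_approx \<tau> lab)"
  by (rule decseq_SucI) auto

lemma decseq_Inter_Int_finite:
  assumes "decseq A" and "finite F"
  obtains N where "(\<Inter>n. A n) \<inter> F = A N \<inter> F"
proof -
  obtain N where N: "\<And>n. card (A N \<inter> F) \<le> card (A n \<inter> F)"
    using ex_has_least_nat[of "\<lambda>_. True" 0 "\<lambda>n. card (A n \<inter> F)"] by auto
  have "A N \<inter> F \<subseteq> A n" for n
  proof (cases "n \<le> N")
    case True
    then show ?thesis using \<open>decseq A\<close> by (auto simp: decseq_def)
  next
    case False
    then have "A n \<inter> F \<subseteq> A N \<inter> F" using decseqD[OF \<open>decseq A\<close>, of N n] by auto
    then have "A n \<inter> F = A N \<inter> F"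
      using N[of n] \<open>finite F\<close> by (metis card_mono card_subset_eq finite_Int le_antisym)
    then show ?thesis by blast
  qed
  then show ?thesis by (intro that) blast
qed

lemma prob_eq_if_Int_support_eq:
  assumes "set_pmf \<mu> \<subseteq> F" and "E \<inter> F = E' \<inter> F"
  shows "measure_pmf.prob \<mu> E = measure_pmf.prob \<mu> E'"
proof -
  have "E \<inter> set_pmf \<mu> = E' \<inter> set_pmf \<mu>" using assms by blast
  then show ?thesis by (metis measure_Int_set_pmf)
qed

lemma equiv_Inter:
  assumes "\<And>n. equiv A (R n)"
  shows "equiv A (\<Inter>n. R n)"
proof (rule equivI)
  show "refl_on A (\<Inter>n. R n)"
    using assms by (auto simp: equiv_def refl_on_def)
  show "sym (\<Inter>n. R n)"
    using assms by (intro symI) (blast elim: equivE dest: symD)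
  show "trans (\<Inter>n. R n)"
    using assms by (intro transI) (blast elim: equivE dest: transD)
qed (use assms equiv_type in blast)

lemma prob_bisimulation_Inter_bisim_approx:
  assumes fin: "\<And>x. finite (set_pmf (\<tau> x))"
  shows "prob_bisimulation \<tau> lab (\<Inter>n. bisim_approx \<tau> lab n)" (is "prob_bisimulation _ _ ?B")
proof -
  have "measure_pmf.prob (\<tau> x) E = measure_pmf.prob (\<tau> y) E"
    if xy: "(x, y) \<in> ?B" and E: "E \<in> UNIV // ?B" for x y E
  proof -
    obtain w where Ew: "E = ?B `` {w}"
      using E by (rule quotientE)
    \<comment> \<open>The approximants stabilise on the finite set \<open>F\<close>; since \<open>F\<close> contains a representative
      of \<open>E\<close>, the class \<open>E\<close> agrees on \<open>F\<close> with a class of that stable level.\<close>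
    define F where "F = insert w (set_pmf (\<tau> x) \<union> set_pmf (\<tau> y))"
    obtain N where N: "?B \<inter> F \<times> F = bisim_approx \<tau> lab N \<inter> F \<times> F"
      using decseq_Inter_Int_finite[OF decseq_bisim_approx, of "F \<times> F"] fin
      unfolding F_def by auto
    define E' where "E' = bisim_approx \<tau> lab N `` {w}"
    have EF: "E \<inter> F = E' \<inter> F"
    proof -
      have "(w, v) \<in> ?B \<longleftrightarrow> (w, v) \<in> bisim_approx \<tau> lab N" if "v \<in> F" for v
        using N that unfolding F_def by blast
      then show ?thesis unfolding Ew E'_def by blast
    qed
    have "(x, y) \<in> bisim_approx \<tau> lab (Suc N)"
      using xy by blast
    moreover have "E' \<in> UNIV // bisim_approx \<tau> lab N"
      unfolding E'_def by (rule quotientI[OF UNIV_I])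
    ultimately have "measure_pmf.prob (\<tau> x) E' = measure_pmf.prob (\<tau> y) E'"
      by simp
    moreover have "set_pmf (\<tau> x) \<subseteq> F" "set_pmf (\<tau> y) \<subseteq> F"
      unfolding F_def by auto
    ultimately show ?thesis
      using prob_eq_if_Int_support_eq EF by metis
  qed
  moreover have "lab x = lab y" if "(x, y) \<in> ?B" for x y
  proof -
    have "(x, y) \<in> bisim_approx \<tau> lab (Suc 0)"
      using that by blast
    then show ?thesis by simp
  qed
  ultimately show ?thesis
    using equiv_Inter[OF equiv_bisim_approx] unfolding prob_bisimulation_def by auto
qed

lemma mono_bisim_Delta: "mono (bisim_Delta \<tau> lab)"
  unfolding mono_def bisim_Delta_def le_fun_def
  by (auto intro!: INF_mono' nn_integral_mono)

lemma bisim_Delta_iter_le_dist: "(bisim_Delta \<tau> lab ^^ n) \<bottom> \<le> bisim_dist \<tau> lab"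
  unfolding bisim_dist_def
  by (rule Kleene_iter_lpfp[OF mono_bisim_Delta]) (simp add: lfp_fixpoint[OF mono_bisim_Delta])

lemma prob_class_diff_le_coupling:
  assumes R: "equiv UNIV R" and E: "E \<in> UNIV // R" and \<omega>: "\<omega> \<in> couplings \<mu> \<nu>"
  shows "\<bar>measure_pmf.prob \<mu> E - measure_pmf.prob \<nu> E\<bar> \<le> measure_pmf.prob \<omega> (- R)"
proof -
  have \<mu>: "measure_pmf.prob \<mu> E = measure_pmf.prob \<omega> (fst -` E)"
    and \<nu>: "measure_pmf.prob \<nu> E = measure_pmf.prob \<omega> (snd -` E)"
    using \<omega> unfolding couplings_def by auto
  obtain w where w: "E = R `` {w}"
    using E by (rule quotientE)
  have "u \<in> E \<longleftrightarrow> v \<in> E" if "(u, v) \<in> R" for u v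
    using that R unfolding w equiv_def by (blast dest: symD transD)
  then have "fst -` E \<subseteq> snd -` E \<union> - R" and "snd -` E \<subseteq> fst -` E \<union> - R"
    by auto
  then have "measure_pmf.prob \<omega> (fst -` E) \<le> measure_pmf.prob \<omega> (snd -` E \<union> - R)"
    and "measure_pmf.prob \<omega> (snd -` E) \<le> measure_pmf.prob \<omega> (fst -` E \<union> - R)"
    by (auto intro: measure_pmf.finite_measure_mono)
  moreover have "measure_pmf.prob \<omega> (A \<union> - R) \<le> measure_pmf.prob \<omega> A + measure_pmf.prob \<omega> (- R)"
    for A by (rule measure_Un_le) simp_all
  ultimately show ?thesis
    unfolding \<mu> \<nu> by (smt (verit))
qed

lemma emeasure_pmf_le_nn_integral:
  assumes "\<And>z. z \<in> set_pmf \<omega> \<Longrightarrow> z \<in> X \<Longrightarrow> c \<le> f z"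
  shows "c * emeasure (measure_pmf \<omega>) X \<le> (\<integral>\<^sup>+ z. f z \<partial>measure_pmf \<omega>)"
proof -
  have "c * emeasure (measure_pmf \<omega>) X = (\<integral>\<^sup>+ z. c * indicator X z \<partial>measure_pmf \<omega>)"
    by (rule nn_integral_cmult_indicator[symmetric]) simp
  also have "\<dots> \<le> (\<integral>\<^sup>+ z. f z \<partial>measure_pmf \<omega>)"
    using assms by (intro nn_integral_mono_AE) (auto simp: AE_measure_pmf_iff split: split_indicator)
  finally show ?thesis .
qed

lemma prob_class_diff_less_if_Delta_less:
  assumes R: "equiv UNIV R" and E: "E \<in> UNIV // R" and lab: "lab x = lab y"
    and far: "\<And>u v. u \<in> set_pmf (\<tau> x) \<Longrightarrow> v \<in> set_pmf (\<tau> y) \<Longrightarrow> (u, v) \<notin> R \<Longrightarrow> c \<le> e u v"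
    and less: "bisim_Delta \<tau> lab e x y < c * ennreal \<epsilon>"
  shows "\<bar>measure_pmf.prob (\<tau> x) E - measure_pmf.prob (\<tau> y) E\<bar> < \<epsilon>"
proof -
  obtain \<omega> where \<omega>: "\<omega> \<in> couplings (\<tau> x) (\<tau> y)"
    and int: "(\<integral>\<^sup>+ z. e (fst z) (snd z) \<partial>measure_pmf \<omega>) < c * ennreal \<epsilon>"
    using less lab unfolding bisim_Delta_def by (auto simp: INF_less_iff)
  have m: "map_pmf fst \<omega> = \<tau> x" "map_pmf snd \<omega> = \<tau> y"
    using \<omega> unfolding couplings_def by auto
  have "fst z \<in> set_pmf (\<tau> x)" "snd z \<in> set_pmf (\<tau> y)" if "z \<in> set_pmf \<omega>" for z
    using that unfolding m[symmetric] by auto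
  then have "c * emeasure (measure_pmf \<omega>) (- R) \<le> (\<integral>\<^sup>+ z. e (fst z) (snd z) \<partial>measure_pmf \<omega>)"
    using far by (intro emeasure_pmf_le_nn_integral) auto
  then have "c * emeasure (measure_pmf \<omega>) (- R) < c * ennreal \<epsilon>"
    using int by order
  then have "emeasure (measure_pmf \<omega>) (- R) < ennreal \<epsilon>"
    by (metis mult_left_mono not_le zero_le)
  then have "measure_pmf.prob \<omega> (- R) < \<epsilon>"
    by (simp add: measure_pmf.emeasure_eq_measure ennreal_less_iff)
  then show ?thesis
    using prob_class_diff_le_coupling[OF R E \<omega>] by linarith
qed

lemma frequently_less_if_liminf_zero:
  fixes f :: "nat \<Rightarrow> ennreal"
  assumes "liminf f = 0" and "0 < \<delta>"
  shows "\<exists>\<^sub>F k in sequentially. f k < \<delta>"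
proof (rule ccontr)
  assume "\<not> (\<exists>\<^sub>F k in sequentially. f k < \<delta>)"
  then have "\<forall>\<^sub>F k in sequentially. \<delta> \<le> f k"
    by (simp add: not_frequently not_less)
  then have "\<delta> \<le> liminf f"
    by (rule Liminf_bounded)
  then show False
    using assms by simp
qed

lemma eventually_uniform_lower_bound:
  fixes f :: "'i \<Rightarrow> nat \<Rightarrow> ennreal"
  assumes "finite A" and "\<And>a. a \<in> A \<Longrightarrow> liminf (f a) \<noteq> 0"
  obtains c where "0 < c" and "\<forall>\<^sub>F k in sequentially. \<forall>a\<in>A. c < f a k"
proof -
  define c0 where "c0 = Min (insert 1 ((\<lambda>a. liminf (f a)) ` A))"
  have "0 < c0"
    using assms unfolding c0_def by (subst Min_gr_iff) (auto simp: zero_less_iff_neq_zero)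
  then obtain c where c: "0 < c" "c < c0"
    using dense by blast
  have "\<forall>\<^sub>F k in sequentially. c < f a k" if "a \<in> A" for a
  proof -
    have "c < liminf (f a)"
      using c that \<open>finite A\<close> unfolding c0_def
      by (meson Min_le finite_imageI finite_insert image_eqI insertI2 order_less_le_trans)
    then show ?thesis
      using le_Liminf_iff[of "liminf (f a)" sequentially "f a"] by blast
  qed
  then show ?thesis
    using \<open>finite A\<close> c(1) by (intro that) (auto simp: eventually_ball_finite)
qed

lemma eq_if_tendsto_frequently_close:
  fixes a b :: "nat \<Rightarrow> real"
  assumes "a \<longlonglongrightarrow> A" and "b \<longlonglongrightarrow> B"
    and close: "\<And>\<epsilon>. 0 < \<epsilon> \<Longrightarrow> \<exists>\<^sub>F k in sequentially. \<bar>a k - b k\<bar> < \<epsilon>"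
  shows "A = B"
proof (rule ccontr)
  assume "A \<noteq> B"
  have "(\<lambda>k. \<bar>a k - b k\<bar>) \<longlonglongrightarrow> \<bar>A - B\<bar>"
    using assms by (intro tendsto_intros)
  moreover have "\<bar>A - B\<bar> / 2 < \<bar>A - B\<bar>"
    using \<open>A \<noteq> B\<close> by simp
  ultimately have "\<forall>\<^sub>F k in sequentially. \<bar>A - B\<bar> / 2 < \<bar>a k - b k\<bar>"
    by (rule order_tendstoD)
  moreover have "\<exists>\<^sub>F k in sequentially. \<bar>a k - b k\<bar> < \<bar>A - B\<bar> / 2"
    using \<open>A \<noteq> B\<close> by (intro close) simp
  ultimately have "\<exists>\<^sub>F k in sequentially. False"
    by (rule frequently_eventually_conj[rotated, THEN frequently_elim1]) linarith
  then show False
    by simp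
qed

lemma prob_class_eq_if_liminf_Delta_zero:
  fixes \<tau>s :: "nat \<Rightarrow> 'x \<Rightarrow> 'x pmf"
  assumes R: "equiv UNIV R" and E: "E \<in> UNIV // R" and lab: "lab x = lab y"
    and conv_x: "(\<lambda>k. measure_pmf.prob (\<tau>s k x) E) \<longlonglongrightarrow> measure_pmf.prob (\<tau> x) E"
    and conv_y: "(\<lambda>k. measure_pmf.prob (\<tau>s k y) E) \<longlonglongrightarrow> measure_pmf.prob (\<tau> y) E"
    and lim: "liminf (\<lambda>k. bisim_Delta (\<tau>s k) lab (e k) x y) = 0"
    and "0 < c"
    and far: "\<forall>\<^sub>F k in sequentially. \<forall>u\<in>set_pmf (\<tau>s k x). \<forall>v\<in>set_pmf (\<tau>s k y).
                (u, v) \<notin> R \<longrightarrow> c \<le> e k u v"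
  shows "measure_pmf.prob (\<tau> x) E = measure_pmf.prob (\<tau> y) E"
proof (rule eq_if_tendsto_frequently_close[OF conv_x conv_y])
  fix \<epsilon> :: real
  assume "0 < \<epsilon>"
  then have "0 < c * ennreal \<epsilon>"
    using \<open>0 < c\<close> by (simp add: ennreal_zero_less_mult_iff)
  then have "\<exists>\<^sub>F k in sequentially. bisim_Delta (\<tau>s k) lab (e k) x y < c * ennreal \<epsilon>"
    by (rule frequently_less_if_liminf_zero[OF lim])
  then have "\<exists>\<^sub>F k in sequentially.
      (\<forall>u\<in>set_pmf (\<tau>s k x). \<forall>v\<in>set_pmf (\<tau>s k y). (u, v) \<notin> R \<longrightarrow> c \<le> e k u v) \<and>
      bisim_Delta (\<tau>s k) lab (e k) x y < c * ennreal \<epsilon>"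
    using far by (rule frequently_eventually_conj)
  then show "\<exists>\<^sub>F k in sequentially.
      \<bar>measure_pmf.prob (\<tau>s k x) E - measure_pmf.prob (\<tau>s k y) E\<bar> < \<epsilon>"
    by (rule frequently_elim1) (auto intro: prob_class_diff_less_if_Delta_less[OF R E lab])
qed

lemma bisim_approx_of_liminf_Delta_zero:
  fixes \<tau>s :: "nat \<Rightarrow> 'x \<Rightarrow> 'x pmf" and lab :: "'x \<Rightarrow> 'l"
  assumes succ_finite: "\<And>x. x \<in> P \<Longrightarrow> finite (succ x)"
    and succ_closed: "\<And>x. x \<in> P \<Longrightarrow> succ x \<subseteq> P"
    and support: "\<And>k x. x \<in> P \<Longrightarrow> set_pmf (\<tau>s k x) \<subseteq> succ x"
    and conv: "\<And>x E. x \<in> P \<Longrightarrow>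
                 (\<lambda>k. measure_pmf.prob (\<tau>s k x) E) \<longlonglongrightarrow> measure_pmf.prob (\<tau> x) E"
  shows "x \<in> P \<Longrightarrow> y \<in> P \<Longrightarrow> liminf (\<lambda>k. (bisim_Delta (\<tau>s k) lab ^^ n) \<bottom> x y) = 0 \<Longrightarrow>
         (x, y) \<in> bisim_approx \<tau> lab n"
proof (induction n arbitrary: x y)
  case 0
  show ?case by simp
next
  case (Suc n)
  define D where "D m k = (bisim_Delta (\<tau>s k) lab ^^ m) \<bottom>" for m k
  let ?R = "bisim_approx \<tau> lab n"
  have D_Suc: "D (Suc n) k = bisim_Delta (\<tau>s k) lab (D n k)" for k
    unfolding D_def by simp
  have lim: "liminf (\<lambda>k. D (Suc n) k x y) = 0"
    using Suc.prems(3) unfolding D_def .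
  have "D n k \<le> D (Suc n) k" for k
    unfolding D_def by (rule funpow_decreasing[OF le_SucI[OF order.refl] mono_bisim_Delta])
  then have "D n k x y \<le> D (Suc n) k x y" for k
    by (simp add: le_fun_def)
  then have "liminf (\<lambda>k. D n k x y) = 0"
    using Liminf_mono[of "\<lambda>k. D n k x y" "\<lambda>k. D (Suc n) k x y" sequentially] lim
    by (simp add: le_zero_eq)
  then have xy: "(x, y) \<in> ?R"
    using Suc.IH Suc.prems(1,2) unfolding D_def by blast
  have lab: "lab x = lab y"
  proof (rule ccontr)
    assume "lab x \<noteq> lab y"
    then have "D (Suc n) k x y = 1" for k
      unfolding D_Suc bisim_Delta_def by simp
    then show False
      using lim Liminf_const[of sequentially "1 :: ennreal"] by simp
  qed
  \<comment> \<open>By the induction hypothesis, successor pairs unrelated at level \<open>n\<close> keep their distance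
    bounded away from \<open>0\<close>; as there are finitely many, the bound is uniform.\<close>
  define bad where "bad = succ x \<times> succ y - ?R"
  have "liminf (\<lambda>k. D n k (fst p) (snd p)) \<noteq> 0" if "p \<in> bad" for p
  proof
    assume "liminf (\<lambda>k. D n k (fst p) (snd p)) = 0"
    moreover have "fst p \<in> P" "snd p \<in> P"
      using that succ_closed[OF Suc.prems(1)] succ_closed[OF Suc.prems(2)]
      unfolding bad_def by auto
    ultimately have "(fst p, snd p) \<in> ?R"
      using Suc.IH unfolding D_def by blast
    then show False
      using that unfolding bad_def by simp
  qed
  then obtain c where "0 < c"
    and far_bad: "\<forall>\<^sub>F k in sequentially. \<forall>p\<in>bad. c < D n k (fst p) (snd p)"
    using eventually_uniform_lower_bound[of bad "\<lambda>p k. D n k (fst p) (snd p)"]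
      succ_finite Suc.prems(1,2) unfolding bad_def by blast
  have "\<forall>\<^sub>F k in sequentially. \<forall>u\<in>set_pmf (\<tau>s k x). \<forall>v\<in>set_pmf (\<tau>s k y).
          (u, v) \<notin> ?R \<longrightarrow> c \<le> D n k u v"
    using far_bad
  proof (rule eventually_mono)
    fix k
    assume far_k: "\<forall>p\<in>bad. c < D n k (fst p) (snd p)"
    show "\<forall>u\<in>set_pmf (\<tau>s k x). \<forall>v\<in>set_pmf (\<tau>s k y). (u, v) \<notin> ?R \<longrightarrow> c \<le> D n k u v"
    proof (intro ballI impI)
      fix u v
      assume "u \<in> set_pmf (\<tau>s k x)" "v \<in> set_pmf (\<tau>s k y)" "(u, v) \<notin> ?R"
      then have "(u, v) \<in> bad"
        using support Suc.prems(1,2) unfolding bad_def by blast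
      then show "c \<le> D n k u v"
        using far_k by fastforce
    qed
  qed
  then have "measure_pmf.prob (\<tau> x) E = measure_pmf.prob (\<tau> y) E" if "E \<in> UNIV // ?R" for E
    using prob_class_eq_if_liminf_Delta_zero[OF equiv_bisim_approx that lab
        conv[OF Suc.prems(1)] conv[OF Suc.prems(2)] _ \<open>0 < c\<close>] lim
    unfolding D_Suc by blast
  then show ?case
    using xy lab by simp
qed

lemma prob_bind_pmf_finite_support:
  assumes "finite A" and "set_pmf p \<subseteq> A"
  shows "measure_pmf.prob (bind_pmf p f) E = (\<Sum>m\<in>A. pmf p m * measure_pmf.prob (f m) E)"
proof -
  have "emeasure (measure_pmf (bind_pmf p f)) E = (\<integral>\<^sup>+m. emeasure (f m) E \<partial>p)"
    by simp
  also have "\<dots> = (\<Sum>m\<in>A. emeasure (f m) E * pmf p m)"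
    using assms by (subst nn_integral_measure_pmf_finite) (auto intro: finite_subset
        sum.mono_neutral_left simp: set_pmf_eq)
  also have "\<dots> = (\<Sum>m\<in>A. ennreal (pmf p m * measure_pmf.prob (f m) E))"
    by (simp add: measure_pmf.emeasure_eq_measure ennreal_mult mult.commute)
  also have "\<dots> = ennreal (\<Sum>m\<in>A. pmf p m * measure_pmf.prob (f m) E)"
    by (rule sum_ennreal) simp
  finally show ?thesis
    by (simp add: measure_pmf.emeasure_eq_measure sum_nonneg)
qed

lemma tendsto_prob_bind_pmf:
  assumes "finite A" and "\<And>k. set_pmf (p k) \<subseteq> A" and "set_pmf q \<subseteq> A"
    and "\<And>m. (\<lambda>k. pmf (p k) m) \<longlonglongrightarrow> pmf q m"
  shows "(\<lambda>k. measure_pmf.prob (bind_pmf (p k) f) E) \<longlonglongrightarrow> measure_pmf.prob (bind_pmf q f) E"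
  unfolding prob_bind_pmf_finite_support[OF assms(1,2)] prob_bind_pmf_finite_support[OF assms(1,3)]
  using assms(4) by (intro tendsto_intros)

lemma pointwise_limit_pmf:
  fixes p :: "nat \<Rightarrow> 'a pmf"
  assumes A: "finite A" and supp: "\<And>k. set_pmf (p k) \<subseteq> A"
    and conv: "\<And>m. m \<in> A \<Longrightarrow> convergent (\<lambda>k. pmf (p k) m)"
  obtains \<mu> where "set_pmf \<mu> \<subseteq> (\<Union>k. set_pmf (p k))" and "\<And>m. (\<lambda>k. pmf (p k) m) \<longlonglongrightarrow> pmf \<mu> m"
proof -
  define f where "f m = lim (\<lambda>k. pmf (p k) m)" for m
  have outside: "pmf (p k) m = 0" if "m \<notin> A" for k m
    using supp that by (meson pmf_eq_0_set_pmf subsetD)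
  have lim: "(\<lambda>k. pmf (p k) m) \<longlonglongrightarrow> f m" for m
    using conv[of m] outside[of m] unfolding f_def by (cases "m \<in> A") (auto simp: convergent_LIMSEQ_iff)
  have nonneg: "0 \<le> f m" for m
    using lim by (rule LIMSEQ_le_const) simp
  have "(\<lambda>k. \<Sum>m\<in>A. pmf (p k) m) \<longlonglongrightarrow> (\<Sum>m\<in>A. f m)"
    using lim by (rule tendsto_sum)
  moreover have "(\<Sum>m\<in>A. pmf (p k) m) = 1" for k
    using A supp by (rule sum_pmf_eq_1)
  ultimately have "(\<lambda>k. 1 :: real) \<longlonglongrightarrow> (\<Sum>m\<in>A. f m)"
    by simp
  then have sum: "(\<Sum>m\<in>A. f m) = 1"
    by (simp add: LIMSEQ_const_iff)
  have f_outside: "f m = 0" if "m \<notin> A" for m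
    using lim[of m] outside[OF that] by (simp add: LIMSEQ_const_iff)
  have "(\<integral>\<^sup>+m. ennreal (f m) \<partial>count_space UNIV) = (\<Sum>m\<in>A. ennreal (f m))"
    using A f_outside by (intro nn_integral_count_space') auto
  also have "\<dots> = 1"
    using sum nonneg by (simp add: sum_ennreal)
  finally have pmf_f: "pmf (embed_pmf f) m = f m" for m
    using nonneg by (simp add: pmf_embed_pmf)
  show ?thesis
  proof
    show "(\<lambda>k. pmf (p k) m) \<longlonglongrightarrow> pmf (embed_pmf f) m" for m
      using lim unfolding pmf_f .
    show "set_pmf (embed_pmf f) \<subseteq> (\<Union>k. set_pmf (p k))"
    proof
      fix m
      assume "m \<in> set_pmf (embed_pmf f)"
      then have "f m \<noteq> 0"
        by (simp add: set_pmf_iff pmf_f)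
      have "\<exists>k. pmf (p k) m \<noteq> 0"
      proof (rule ccontr)
        assume "\<nexists>k. pmf (p k) m \<noteq> 0"
        then have "(\<lambda>k. 0 :: real) \<longlonglongrightarrow> f m"
          using lim[of m] by simp
        then show False
          using \<open>f m \<noteq> 0\<close> by (simp add: LIMSEQ_const_iff)
      qed
      then obtain k where "pmf (p k) m \<noteq> 0" ..
      then show "m \<in> (\<Union>k. set_pmf (p k))"
        by (auto simp: set_pmf_iff)
    qed
  qed
qed

lemma convergent_subseq_countable:
  fixes f :: "'i \<Rightarrow> nat \<Rightarrow> real"
  assumes I: "countable I" and bounded: "\<And>i. i \<in> I \<Longrightarrow> bounded (range (f i))"
  obtains q where "strict_mono q" and "\<And>i. i \<in> I \<Longrightarrow> convergent (\<lambda>k. f i (q k))"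
proof (cases "I = {}")
  case True
  then show ?thesis
    using strict_mono_id that by blast
next
  case False
  define e where "e = from_nat_into I"
  have e: "e n \<in> I" for n
    unfolding e_def using False by (rule from_nat_into)
  define P where "P n s \<longleftrightarrow> convergent (\<lambda>k. f (e n) (s k))" for n s
  interpret subseqs P
  proof
    fix n and s :: "nat \<Rightarrow> nat"
    have "bounded (range (\<lambda>k. f (e n) (s k)))"
      using bounded[OF e] by (rule bounded_subset) auto
    then obtain l r where "strict_mono r" "((\<lambda>k. f (e n) (s k)) \<circ> r) \<longlonglongrightarrow> l"
      using bounded_imp_convergent_subsequence by blast
    then show "\<exists>r. strict_mono r \<and> P n (s \<circ> r)"
      unfolding P_def convergent_def by (auto simp: o_def)
  qed
  have P_diagseq: "P n diagseq" for n
  proof -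
    have "P n (diagseq \<circ> (+) (Suc n))"
    proof (rule diagseq_holds)
      fix r s :: "nat \<Rightarrow> nat" and n
      assume "strict_mono r" "P n s"
      then show "P n (s \<circ> r)"
        unfolding P_def using convergent_subseq_convergent by (auto simp: o_def)
    qed
    then have "convergent (\<lambda>k. f (e n) ((diagseq \<circ> (+) (Suc n)) k))"
      by (simp only: P_def[of n "diagseq \<circ> (+) (Suc n)"])
    moreover have "(\<lambda>k. f (e n) ((diagseq \<circ> (+) (Suc n)) k)) = (\<lambda>k. f (e n) (diagseq (k + Suc n)))"
      by (simp add: add.commute)
    ultimately have "convergent (\<lambda>k. f (e n) (diagseq (k + Suc n)))"
      by (simp only:)
    then have "convergent (\<lambda>k. f (e n) (diagseq k))"
      by (rule convergent_ignore_initial_segment[THEN iffD1])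
    then show "P n diagseq"
      by (simp only: P_def[of n diagseq])
  qed
  show ?thesis
  proof (rule that[OF subseq_diagseq])
    fix i
    assume "i \<in> I"
    then obtain n where "i = e n"
      using from_nat_into_surj[OF I] unfolding e_def by metis
    then show "convergent (\<lambda>k. f i (diagseq k))"
      using P_diagseq[of n] by (simp only: P_def[of n diagseq])
  qed
qed

lemma valid_steps_snoc:
  "valid_steps phi s (xs @ [(m, t)]) \<longleftrightarrow> valid_steps phi s xs \<and>
     (\<exists>\<mu>. phi (path_last (s, xs)) m = Some \<mu> \<and> pmf \<mu> t > 0)"
  by (induction phi s xs rule: valid_steps.induct) (auto simp: path_last_def)

lemma is_path_path_ext:
  assumes "is_path S phi \<rho>" and "phi (path_last \<rho>) m = Some \<mu>" and "t \<in> set_pmf \<mu>"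
  shows "is_path S phi (path_ext \<rho> m t)"
  using assms unfolding is_path_def path_ext_def by (auto simp: valid_steps_snoc set_pmf_iff)

lemma countable_paths:
  assumes "is_mdp S Act L phi lab"
  shows "countable {\<rho>. is_path S phi \<rho>}"
proof -
  have step: "m \<in> Act \<and> t \<in> S" if "phi s m = Some \<mu>" "pmf \<mu> t > 0" for s m \<mu> t
  proof -
    have "t \<in> set_pmf \<mu>"
      using that(2) by (simp add: set_pmf_iff)
    then show ?thesis
      using assms that(1) unfolding is_mdp_def by blast
  qed
  have steps_lists: "xs \<in> lists (Act \<times> S)" if "valid_steps phi s xs" for s xs
    using that
  proof (induction xs arbitrary: s)
    case (Cons x xs)
    obtain m t where x: "x = (m, t)"
      by fastforce
    with Cons.prems obtain \<mu> where "phi s m = Some \<mu>" "pmf \<mu> t > 0" "valid_steps phi t xs"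
      by auto
    then show ?case
      using step Cons.IH x by simp
  qed simp
  have "{\<rho>. is_path S phi \<rho>} \<subseteq> S \<times> lists (Act \<times> S)"
  proof
    fix \<rho>
    assume "\<rho> \<in> {\<rho>. is_path S phi \<rho>}"
    then show "\<rho> \<in> S \<times> lists (Act \<times> S)"
      unfolding is_path_def mem_Times_iff using steps_lists by blast
  qed
  moreover have "countable (S \<times> lists (Act \<times> S))"
    using assms unfolding is_mdp_def by (intro countable_SIGMA countable_lists countable_finite) auto
  ultimately show ?thesis
    by (rule countable_subset)
qed

definition path_succs ::
  "'s set \<Rightarrow> 'a set \<Rightarrow> ('s \<Rightarrow> 'a \<Rightarrow> 's pmf option) \<Rightarrow> ('s,'a) path \<Rightarrow> ('s,'a) path set" where
  "path_succs S Act phi \<rho> = (\<lambda>(m, t). path_ext \<rho> m t) ` (Act \<times> S) \<inter> {\<sigma>. is_path S phi \<sigma>}"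

lemma finite_path_succs: "is_mdp S Act L phi lab \<Longrightarrow> finite (path_succs S Act phi \<rho>)"
  unfolding path_succs_def is_mdp_def by auto

lemma strategy_support:
  "is_strategy S Act phi \<alpha> \<Longrightarrow> is_path S phi \<rho> \<Longrightarrow>
     set_pmf (\<alpha> \<rho>) \<subseteq> {m \<in> Act. phi (path_last \<rho>) m \<noteq> None}"
  unfolding is_strategy_def by blast

lemma set_pmf_induced_trans:
  assumes mdp: "is_mdp S Act L phi lab" and \<alpha>: "is_strategy S Act phi \<alpha>" and \<rho>: "is_path S phi \<rho>"
  shows "set_pmf (induced_trans phi \<alpha> \<rho>) \<subseteq> path_succs S Act phi \<rho>"
proof
  fix \<sigma>
  assume "\<sigma> \<in> set_pmf (induced_trans phi \<alpha> \<rho>)"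
  then obtain m where m: "m \<in> set_pmf (\<alpha> \<rho>)" and \<sigma>: "\<sigma> \<in> set_pmf (case phi (path_last \<rho>) m of
      None \<Rightarrow> return_pmf \<rho> | Some \<mu> \<Rightarrow> map_pmf (path_ext \<rho> m) \<mu>)"
    unfolding induced_trans_def by auto
  obtain \<mu> where "m \<in> Act" and \<mu>: "phi (path_last \<rho>) m = Some \<mu>"
    using strategy_support[OF \<alpha> \<rho>] m by auto
  then obtain t where t: "t \<in> set_pmf \<mu>" and \<sigma>: "\<sigma> = path_ext \<rho> m t"
    using \<sigma> by auto
  have "t \<in> S"
    using mdp \<mu> t unfolding is_mdp_def by blast
  then show "\<sigma> \<in> path_succs S Act phi \<rho>"
    using is_path_path_ext[OF \<rho> \<mu> t] \<open>m \<in> Act\<close> unfolding path_succs_def \<sigma> by auto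
qed

lemma finite_set_pmf_induced_trans:
  assumes "is_mdp S Act L phi lab" and "finite (set_pmf (\<alpha> \<rho>))"
  shows "finite (set_pmf (induced_trans phi \<alpha> \<rho>))"
proof -
  have "finite (set_pmf \<mu>)" if "phi s m = Some \<mu>" for s m \<mu>
    using assms(1) that unfolding is_mdp_def by (meson finite_subset)
  then show ?thesis
    using assms(2) unfolding induced_trans_def by (auto split: option.split)
qed

lemma tendsto_prob_induced_trans:
  assumes mdp: "is_mdp S Act L phi lab" and \<beta>: "\<And>k. is_strategy S Act phi (\<beta> k)"
    and \<alpha>: "is_strategy S Act phi \<alpha>" and \<rho>: "is_path S phi \<rho>"
    and conv: "\<And>m. (\<lambda>k. pmf (\<beta> k \<rho>) m) \<longlonglongrightarrow> pmf (\<alpha> \<rho>) m"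
  shows "(\<lambda>k. measure_pmf.prob (induced_trans phi (\<beta> k) \<rho>) E)
           \<longlonglongrightarrow> measure_pmf.prob (induced_trans phi \<alpha> \<rho>) E"
  unfolding induced_trans_def
  using mdp strategy_support[OF \<beta> \<rho>] strategy_support[OF \<alpha> \<rho>] conv
  by (intro tendsto_prob_bind_pmf[where A = Act]) (auto simp: is_mdp_def)

section \<open>Limit strategies\<close>

lemma convergent_subseq_strategies:
  fixes \<alpha>s :: "nat \<Rightarrow> ('s, 'a) path \<Rightarrow> 'a pmf"
  assumes mdp: "is_mdp S Act L phi lab" and strat: "\<And>i. is_strategy S Act phi (\<alpha>s i)"
  obtains q \<alpha> where "strict_mono q" and "is_strategy S Act phi \<alpha>"
    and "\<And>\<rho>. finite (set_pmf (\<alpha> \<rho>))"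
    and "\<And>\<rho> m. is_path S phi \<rho> \<Longrightarrow> (\<lambda>k. pmf (\<alpha>s (q k) \<rho>) m) \<longlonglongrightarrow> pmf (\<alpha> \<rho>) m"
proof -
  have Act: "finite Act"
    using mdp by (simp add: is_mdp_def)
  let ?J = "{\<rho>. is_path S phi \<rho>} \<times> Act"
  obtain q where q: "strict_mono q"
    and conv: "\<And>j. j \<in> ?J \<Longrightarrow> convergent (\<lambda>k. pmf (\<alpha>s (q k) (fst j)) (snd j))"
  proof (rule convergent_subseq_countable[of ?J "\<lambda>j k. pmf (\<alpha>s k (fst j)) (snd j)"])
    show "countable ?J"
      by (rule countable_SIGMA[OF countable_paths[OF mdp] countable_finite[OF Act]])
    show "bounded (range (\<lambda>k. pmf (\<alpha>s k (fst j)) (snd j)))" for j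
      by (rule boundedI[of _ 1]) (auto simp: pmf_le_1)
  qed blast
  define is_limit where "is_limit \<rho> \<mu> \<longleftrightarrow>
      set_pmf \<mu> \<subseteq> {m \<in> Act. phi (path_last \<rho>) m \<noteq> None} \<and>
      (\<forall>m. (\<lambda>k. pmf (\<alpha>s (q k) \<rho>) m) \<longlonglongrightarrow> pmf \<mu> m)" for \<rho> \<mu>
  have limit_exists: "\<exists>\<mu>. is_limit \<rho> \<mu>" if \<rho>: "is_path S phi \<rho>" for \<rho>
  proof -
    have supp: "set_pmf (\<alpha>s (q k) \<rho>) \<subseteq> {m \<in> Act. phi (path_last \<rho>) m \<noteq> None}" for k
      using strategy_support[OF strat \<rho>] .
    obtain \<mu> where "set_pmf \<mu> \<subseteq> (\<Union>k. set_pmf (\<alpha>s (q k) \<rho>))"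
      and "\<And>m. (\<lambda>k. pmf (\<alpha>s (q k) \<rho>) m) \<longlonglongrightarrow> pmf \<mu> m"
    proof (rule pointwise_limit_pmf[OF Act])
      show "set_pmf (\<alpha>s (q k) \<rho>) \<subseteq> Act" for k
        using supp[of k] by blast
      show "convergent (\<lambda>k. pmf (\<alpha>s (q k) \<rho>) m)" if "m \<in> Act" for m
        using conv[of "(\<rho>, m)"] \<rho> that by simp
    qed blast
    then show ?thesis
      unfolding is_limit_def using supp by blast
  qed
  define \<alpha> where "\<alpha> \<rho> = (if is_path S phi \<rho> then SOME \<mu>. is_limit \<rho> \<mu> else return_pmf undefined)" for \<rho>
  have \<alpha>_limit: "is_limit \<rho> (\<alpha> \<rho>)" if "is_path S phi \<rho>" for \<rho>
    using someI_ex[OF limit_exists[OF that]] that unfolding \<alpha>_def by simp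
  show ?thesis
  proof (rule that[OF q])
    show "is_strategy S Act phi \<alpha>"
      using \<alpha>_limit unfolding is_strategy_def is_limit_def by blast
    show "finite (set_pmf (\<alpha> \<rho>))" for \<rho>
    proof (cases "is_path S phi \<rho>")
      case True
      then show ?thesis
        using \<alpha>_limit[of \<rho>] Act unfolding is_limit_def by (auto intro: finite_subset)
    qed (simp add: \<alpha>_def)
    show "(\<lambda>k. pmf (\<alpha>s (q k) \<rho>) m) \<longlonglongrightarrow> pmf (\<alpha> \<rho>) m" if "is_path S phi \<rho>" for \<rho> m
      using \<alpha>_limit[OF that] unfolding is_limit_def by blast
  qed
qed

lemma bisim_approx_induced_of_liminf_Delta_zero:
  assumes mdp: "is_mdp S Act L phi lab"
    and \<beta>: "\<And>k. is_strategy S Act phi (\<beta> k)" and \<alpha>: "is_strategy S Act phi \<alpha>"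
    and conv: "\<And>\<rho> m. is_path S phi \<rho> \<Longrightarrow> (\<lambda>k. pmf (\<beta> k \<rho>) m) \<longlonglongrightarrow> pmf (\<alpha> \<rho>) m"
    and "is_path S phi \<rho>" and "is_path S phi \<sigma>"
    and "liminf (\<lambda>k. (bisim_Delta (induced_trans phi (\<beta> k)) (induced_label lab) ^^ n) \<bottom> \<rho> \<sigma>) = 0"
  shows "(\<rho>, \<sigma>) \<in> bisim_approx (induced_trans phi \<alpha>) (induced_label lab) n"
proof (rule bisim_approx_of_liminf_Delta_zero[where P = "{\<rho>. is_path S phi \<rho>}"
      and succ = "path_succs S Act phi"])
  show "finite (path_succs S Act phi \<rho>)" for \<rho>
    using mdp by (rule finite_path_succs)
  show "path_succs S Act phi \<rho> \<subseteq> {\<rho>. is_path S phi \<rho>}" for \<rho>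
    unfolding path_succs_def by blast
  show "set_pmf (induced_trans phi (\<beta> k) \<rho>) \<subseteq> path_succs S Act phi \<rho>"
    if "\<rho> \<in> {\<rho>. is_path S phi \<rho>}" for k \<rho>
    using set_pmf_induced_trans[OF mdp \<beta>] that by blast
  show "(\<lambda>k. measure_pmf.prob (induced_trans phi (\<beta> k) \<rho>) E)
          \<longlonglongrightarrow> measure_pmf.prob (induced_trans phi \<alpha> \<rho>) E"
    if "\<rho> \<in> {\<rho>. is_path S phi \<rho>}" for \<rho> E
    using tendsto_prob_induced_trans[OF mdp \<beta> \<alpha> _ conv] that by blast
qed (use assms in simp_all)

lemma prob_bisimilar_induced_of_liminf_dist_zero:
  assumes mdp: "is_mdp S Act L phi lab"
    and \<beta>: "\<And>k. is_strategy S Act phi (\<beta> k)" and \<alpha>: "is_strategy S Act phi \<alpha>"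
    and fin: "\<And>\<rho>. finite (set_pmf (\<alpha> \<rho>))"
    and conv: "\<And>\<rho> m. is_path S phi \<rho> \<Longrightarrow> (\<lambda>k. pmf (\<beta> k \<rho>) m) \<longlonglongrightarrow> pmf (\<alpha> \<rho>) m"
    and \<rho>: "is_path S phi \<rho>" and \<sigma>: "is_path S phi \<sigma>"
    and lim: "liminf (\<lambda>k. bisim_dist (induced_trans phi (\<beta> k)) (induced_label lab) \<rho> \<sigma>) = 0"
  shows "prob_bisimilar (induced_trans phi \<alpha>) (induced_label lab) \<rho> \<sigma>"
proof -
  have "(\<rho>, \<sigma>) \<in> bisim_approx (induced_trans phi \<alpha>) (induced_label lab) n" for n
  proof (rule bisim_approx_induced_of_liminf_Delta_zero[OF mdp \<beta> \<alpha> conv \<rho> \<sigma>])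
    have "liminf (\<lambda>k. (bisim_Delta (induced_trans phi (\<beta> k)) (induced_label lab) ^^ n) \<bottom> \<rho> \<sigma>)
        \<le> liminf (\<lambda>k. bisim_dist (induced_trans phi (\<beta> k)) (induced_label lab) \<rho> \<sigma>)"
      by (intro Liminf_mono always_eventually allI le_funD[OF le_funD[OF bisim_Delta_iter_le_dist]])
    then show "liminf (\<lambda>k. (bisim_Delta (induced_trans phi (\<beta> k)) (induced_label lab) ^^ n) \<bottom> \<rho> \<sigma>) = 0"
      using lim by simp
  qed
  then show ?thesis
    using prob_bisimulation_Inter_bisim_approx[of "induced_trans phi \<alpha>" "induced_label lab",
        OF finite_set_pmf_induced_trans[OF mdp fin]]
    unfolding prob_bisimilar_def by blast
qed

theorem mainTheorem13:
  fixes S :: "'s set" and Act :: "'a set" and L :: "'l set"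
    and phi :: "'s \<Rightarrow> 'a \<Rightarrow> 's pmf option" and lab :: "'s \<Rightarrow> 'l"
    and \<alpha>s :: "nat \<Rightarrow> (('s,'a) path \<Rightarrow> 'a pmf)" and S0 :: "'s set"
  assumes "is_mdp S Act L phi lab"
    and "\<And>i. is_strategy S Act phi (\<alpha>s i)"
    and "S0 \<subseteq> S"
    and "liminf (\<lambda>i. SUP st \<in> S0 \<times> S0.
            bisim_dist (induced_trans phi (\<alpha>s i)) (induced_label lab)
              (state_path (fst st)) (state_path (snd st))) = 0"
  shows "\<exists>\<alpha>. is_strategy S Act phi \<alpha> \<and>
           (\<forall>s\<in>S0. \<forall>t\<in>S0. prob_bisimilar (induced_trans phi \<alpha>) (induced_label lab)
                              (state_path s) (state_path t))"
proof -
  let ?d = "\<lambda>\<alpha> s t. bisim_dist (induced_trans phi \<alpha>) (induced_label lab) (state_path s) (state_path t)"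
  define d where "d i = (SUP st \<in> S0 \<times> S0. ?d (\<alpha>s i) (fst st) (snd st))" for i
  obtain r where r: "strict_mono r" "(d \<circ> r) \<longlonglongrightarrow> 0"
    using liminf_subseq_lim[of d] assms(4) unfolding d_def by auto
  obtain q \<alpha> where q: "strict_mono q" and \<alpha>: "is_strategy S Act phi \<alpha>"
    and fin: "\<And>\<rho>. finite (set_pmf (\<alpha> \<rho>))"
    and conv: "\<And>\<rho> m. is_path S phi \<rho> \<Longrightarrow> (\<lambda>k. pmf (\<alpha>s (r (q k)) \<rho>) m) \<longlonglongrightarrow> pmf (\<alpha> \<rho>) m"
    using convergent_subseq_strategies[OF assms(1), of "\<lambda>i. \<alpha>s (r i)"] assms(2) by blast
  have "prob_bisimilar (induced_trans phi \<alpha>) (induced_label lab) (state_path s) (state_path t)"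
    if "s \<in> S0" "t \<in> S0" for s t
  proof (rule prob_bisimilar_induced_of_liminf_dist_zero[OF assms(1) assms(2) \<alpha> fin conv])
    show "is_path S phi (state_path s)" "is_path S phi (state_path t)"
      using that assms(3) by (auto simp: is_path_def state_path_def)
    have "?d (\<alpha>s (r (q k))) s t \<le> d (r (q k))" for k
      unfolding d_def using that by (intro SUP_upper2[of "(s, t)"]) auto
    then have "liminf (\<lambda>k. ?d (\<alpha>s (r (q k))) s t) \<le> liminf (\<lambda>k. d (r (q k)))"
      by (intro Liminf_mono) simp
    also have "\<dots> = 0"
      using LIMSEQ_subseq_LIMSEQ[OF r(2) q] by (simp add: o_def lim_imp_Liminf)
    finally show "liminf (\<lambda>k. ?d (\<alpha>s (r (q k))) s t) = 0"
      by simp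
  qed
  then show ?thesis
    using \<alpha> by blast
qed

end
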